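(* Let $\mu$ be a Borel probability measure on the unit circle $\mathbb{S}^1\subset\mathbb{R}^2$. Then $$\int_{\mathbb{S}^1}\int_{\mathbb{S}^1}\int_{\mathbb{S}^1}\left|\langle x,y\rangle\langle x,z\rangle\langle y,z\rangle\right|\,d\mu(x)\,d\mu(y)\,d\mu(z)\ge\frac14,$$ with equality if and only if $\mu$ is, up to central symmetry, a convex combination of uniform distributions over two (not necessarily distinct) orthonormal bases; that is, letting $\pi:\mathbb{S}^1\to\mathbb{S}^1/\{\pm1\}$ be the quotient map $x\mapsto[x]=\{x,-x\}$, equality holds if and only if there exist unit vectors $a,b\in\mathbb{S}^1$ and $\lambda\in[0,1]$ such that $$\pi_*\mu=\lambda\left(\tfrac12\delta_{[a]}+\tfrac12\delta_{[a^\perp]}\right)+(1-\lambda)\left(\tfrac12\delta_{[b]}+\tfrac12\delta_{[b^\perp]}\right),$$ where $v^\perp$ denotes a unit vector orthogonal to $v$.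
   Context: $\langle\cdot,\cdot\rangle$ is the Euclidean inner product on $\mathbb{R}^2$; $\pi_*\mu$ denotes the pushforward measure and $\delta$ a Dirac mass. *)

theory Defs
  imports "HOL-Probability.Probability"
begin

definition triple_energy :: "(real^2) measure \<Rightarrow> real" where
  "triple_energy M = (\<integral>z. (\<integral>y. (\<integral>x. \<bar>(x \<bullet> y) * (x \<bullet> z) * (y \<bullet> z)\<bar> \<partial>M) \<partial>M) \<partial>M)"

text \<open>Pushforward of M to S^1/{+-1} described on its Borel sets, i.e. on
  centrally symmetric Borel sets A (A = -A).\<close>
definition two_bases_mixture ::
  "(real^2) measure \<Rightarrow> real^2 \<Rightarrow> real^2 \<Rightarrow> real^2 \<Rightarrow> real^2 \<Rightarrow> real \<Rightarrow> bool" where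
  "two_bases_mixture M a a' b b' lam \<longleftrightarrow>
     (\<forall>A \<in> sets borel. uminus ` A = A \<longrightarrow>
        measure M A =
          lam * (indicator A a / 2 + indicator A a' / 2)
          + (1 - lam) * (indicator A b / 2 + indicator A b' / 2))"

end

theory Submission
  imports Defs
begin

text \<open>Let \<open>\<phi>\<close> be the squaring map of the unit circle, viewed in the complex plane. For unit
  vectors, \<open>\<langle>x,y\<rangle>\<langle>x,z\<rangle>\<langle>y,z\<rangle> = (1 + \<langle>\<phi> x,\<phi> y\<rangle> + \<langle>\<phi> x,\<phi> z\<rangle> + \<langle>\<phi> y,\<phi> z\<rangle>) / 4\<close>, so
  integrating against \<open>\<mu>\<^sup>3\<close> gives \<open>1/4 + 3/4 |m|\<^sup>2\<close>, where \<open>m\<close> is the mean of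
  \<open>\<nu> = \<phi>\<^sub>*\<mu>\<close>. As \<open>|t| \<ge> t\<close>, the energy is at least \<open>1/4\<close>, with equality iff \<open>m = 0\<close>
  and the product is almost surely nonnegative. Since the product is also
  \<open>(|\<phi> x + \<phi> y + \<phi> z|\<^sup>2 - 1) / 8\<close>, equality means that \<open>\<nu>\<close> is centred and that no
  three points of its support have a sum of norm less than \<open>1\<close>. Such a support contains an antipodal
  pair \<open>\<plusminus>a\<close>, and any two support points on opposite sides of the line through \<open>a\<close> are
  antipodal as well. So \<open>\<nu>\<close> lives on at most two antipodal pairs, with equal weights within each pair
  because it is centred; pulled back along \<open>\<phi>\<close>, the two pairs become two orthonormal bases.\<close>

section \<open>Plane vectors and the squaring map of the circle\<close>

lemma inner_vec2: "(x::real^2) \<bullet> y = x$1 * y$1 + x$2 * y$2"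
  by (simp add: inner_vec_def sum_2)

lemma vec2_eq_iff: "(x::real^2) = y \<longleftrightarrow> x$1 = y$1 \<and> x$2 = y$2"
  by (auto simp: vec_eq_iff forall_2)

lemma norm_vec2_eq_1_iff: "norm (x::real^2) = 1 \<longleftrightarrow> x$1^2 + x$2^2 = 1"
  by (simp add: norm_eq_sqrt_inner inner_vec2 power2_eq_square)

lemma inner_sphere_self: "a \<in> sphere 0 1 \<Longrightarrow> a \<bullet> a = 1"
  by (simp add: power2_norm_eq_inner[symmetric])

lemma sphere_neq_uminus:
  fixes a :: "'a::real_normed_vector"
  assumes "a \<in> sphere 0 1"
  shows "a \<noteq> - a"
proof
  assume "a = - a"
  then have "2 *\<^sub>R a = 0"
    by (metis scaleR_2 eq_neg_iff_add_eq_0)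
  then show False
    using assms by simp
qed

definition rot90 :: "real^2 \<Rightarrow> real^2" where
  "rot90 a = vector [- a$2, a$1]"

lemma rot90_nth [simp]: "rot90 a $ 1 = - a$2" "rot90 a $ 2 = a$1"
  by (simp_all add: rot90_def)

lemma rot90_uminus [simp]: "rot90 (- a) = - rot90 a"
  by (simp add: vec2_eq_iff)

lemma inner_rot90_self [simp]: "a \<bullet> rot90 a = 0"
  by (simp add: inner_vec2)

lemma rot90_sphere: "a \<in> sphere 0 1 \<Longrightarrow> rot90 a \<in> sphere 0 1"
  by (simp add: norm_vec2_eq_1_iff add.commute)

lemma sphere_inner_rot90_eq_0:
  assumes a: "a \<in> sphere 0 1" and v: "v \<in> sphere 0 1" and "v \<bullet> rot90 a = 0"
  shows "v = a \<or> v = -a"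
proof -
  have ha: "a$1^2 + a$2^2 = 1" and hv: "v$1^2 + v$2^2 = 1"
    using a v by (simp_all add: norm_vec2_eq_1_iff)
  have cross: "v$2 * a$1 = v$1 * a$2"
    using \<open>v \<bullet> rot90 a = 0\<close> by (simp add: inner_vec2 algebra_simps)
  have v_eq: "v$1 = (v \<bullet> a) * a$1" "v$2 = (v \<bullet> a) * a$2"
    unfolding inner_vec2 using ha cross by algebra+
  then have "(v \<bullet> a)^2 = 1"
    using ha hv by algebra
  then have "v \<bullet> a = 1 \<or> v \<bullet> a = -1"
    by (simp add: power2_eq_1_iff)
  then show ?thesis
    using v_eq by (auto simp: vec2_eq_iff)
qed

lemma sphere_orthogonal_eq_rot90:
  assumes a: "a \<in> sphere 0 1" and a': "a' \<in> sphere 0 1" and "a \<bullet> a' = 0"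
  shows "a' = rot90 a \<or> a' = - rot90 a"
proof -
  have "a' \<bullet> rot90 (rot90 a) = 0"
    using \<open>a \<bullet> a' = 0\<close> by (simp add: inner_vec2 algebra_simps)
  then show ?thesis
    using sphere_inner_rot90_eq_0[OF rot90_sphere[OF a] a'] by simp
qed

text \<open>In complex notation this is the squaring map: it doubles angles and, on the circle,
  identifies antipodal points.\<close>
definition double_angle :: "real^2 \<Rightarrow> real^2" where
  "double_angle x = vector [x$1^2 - x$2^2, 2 * x$1 * x$2]"

lemma double_angle_nth [simp]:
  "double_angle x $ 1 = x$1^2 - x$2^2" "double_angle x $ 2 = 2 * x$1 * x$2"
  by (simp_all add: double_angle_def)

lemma continuous_on_double_angle: "continuous_on UNIV double_angle"
proof -
  have "continuous_on UNIV (\<lambda>x. \<chi> i. double_angle x $ i)"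
  proof (intro continuous_on_vec_lambda)
    fix i :: 2
    have "continuous_on UNIV (\<lambda>x::real^2. x$1^2 - x$2^2)"
      "continuous_on UNIV (\<lambda>x::real^2. 2 * x$1 * x$2)"
      by (intro continuous_intros)+
    then show "continuous_on UNIV (\<lambda>x. double_angle x $ i)"
      using exhaust_2[of i] by (elim disjE) simp_all
  qed
  then show ?thesis
    by simp
qed

lemma double_angle_sphere: "x \<in> sphere 0 1 \<Longrightarrow> double_angle x \<in> sphere 0 1"
  unfolding mem_sphere_0 norm_vec2_eq_1_iff double_angle_nth by algebra

lemma double_angle_uminus [simp]: "double_angle (- x) = double_angle x"
  by (simp add: vec2_eq_iff)

lemma double_angle_rot90: "double_angle (rot90 a) = - double_angle a"
  by (simp add: vec2_eq_iff)

lemma double_angle_scaleR: "double_angle (c *\<^sub>R x) = c^2 *\<^sub>R double_angle x"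
  by (simp add: vec2_eq_iff power2_eq_square algebra_simps)

text \<open>A Borel right inverse of the squaring map on the circle: the square root with argument
  in the half-open interval from minus to plus a right angle.\<close>
definition half_angle :: "real^2 \<Rightarrow> real^2" where
  "half_angle v = (if v = vector [-1, 0] then vector [0, 1] else sgn (vector [1, 0] + v))"

lemma borel_measurable_half_angle: "half_angle \<in> borel_measurable borel"
  unfolding half_angle_def by measurable

lemma half_angle_sphere:
  assumes v: "v \<in> sphere 0 1"
  shows "half_angle v \<in> sphere 0 1" and "double_angle (half_angle v) = v"
proof -
  have hv: "v$1^2 + v$2^2 = 1"
    using v by (simp add: norm_vec2_eq_1_iff)
  have "half_angle v \<in> sphere 0 1 \<and> double_angle (half_angle v) = v"
  proof (cases "v = vector [-1, 0]")
    case True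
    then show ?thesis
      by (simp add: half_angle_def norm_vec2_eq_1_iff vec2_eq_iff)
  next
    case False
    define w where "w = vector [1, 0] + v"
    have "v$1 \<noteq> -1"
      using False hv by (auto simp: vec2_eq_iff)
    moreover have "(v$1)^2 \<le> 1"
      using hv zero_le_power2[of "v$2"] by linarith
    then have "\<bar>v$1\<bar> \<le> 1"
      by (simp add: abs_square_le_1)
    ultimately have v1: "0 < 1 + v$1"
      by linarith
    have "(norm w)^2 = w$1^2 + w$2^2"
      unfolding power2_norm_eq_inner inner_vec2 by (simp add: power2_eq_square)
    also have "\<dots> = 2 * (1 + v$1)"
      using hv by (simp add: w_def power2_eq_square algebra_simps)
    finally have nw: "(norm w)^2 = 2 * (1 + v$1)" .
    have dw: "double_angle w = (2 * (1 + v$1)) *\<^sub>R v"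
      using hv by (simp add: vec2_eq_iff w_def power2_eq_square algebra_simps)
    have "double_angle (sgn w) = inverse ((norm w)^2) *\<^sub>R double_angle w"
      by (simp add: sgn_div_norm double_angle_scaleR power_inverse)
    then have "double_angle (sgn w) = v"
      using v1 by (simp add: nw dw)
    moreover have "w \<noteq> 0"
      using nw v1 by auto
    ultimately show ?thesis
      using False by (simp add: half_angle_def w_def norm_sgn)
  qed
  then show "half_angle v \<in> sphere 0 1" and "double_angle (half_angle v) = v"
    by auto
qed

lemma half_angle_double_angle:
  assumes x: "x \<in> sphere 0 1"
  shows "half_angle (double_angle x) = x \<or> half_angle (double_angle x) = - x"
proof (cases "x$1 = 0")
  case True
  then have "x$2 = 1 \<or> x$2 = -1"
    using x by (simp add: norm_vec2_eq_1_iff power2_eq_1_iff)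
  then show ?thesis
    using True by (auto simp: half_angle_def vec2_eq_iff)
next
  case False
  have hx: "x$1^2 + x$2^2 = 1"
    using x by (simp add: norm_vec2_eq_1_iff)
  have "double_angle x \<noteq> vector [-1, 0]"
    using False hx by (auto simp: vec2_eq_iff)
  moreover have "vector [1, 0] + double_angle x = (2 * x$1) *\<^sub>R x"
    using hx by (simp add: vec2_eq_iff power2_eq_square algebra_simps)
  moreover have "sgn x = x"
    using x by (simp add: sgn_div_norm)
  ultimately have "half_angle (double_angle x) = sgn (x$1) *\<^sub>R x"
    by (simp add: half_angle_def sgn_scaleR sgn_mult)
  then show ?thesis
    using False by (auto simp: sgn_real_def)
qed

lemma double_angle_orthogonal:
  assumes "a \<in> sphere 0 1" "a' \<in> sphere 0 1" "a \<bullet> a' = 0"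
  shows "double_angle a' = - double_angle a"
  using sphere_orthogonal_eq_rot90[OF assms] by (auto simp: double_angle_rot90)

lemma half_angle_uminus:
  assumes "p \<in> sphere 0 1"
  shows "half_angle (- p) = rot90 (half_angle p) \<or> half_angle (- p) = - rot90 (half_angle p)"
proof -
  have "- p = double_angle (rot90 (half_angle p))"
    using half_angle_sphere[OF assms] by (simp add: double_angle_rot90)
  then show ?thesis
    using half_angle_double_angle[OF rot90_sphere[OF half_angle_sphere(1)[OF assms]]] by simp
qed

lemma mem_uminus_image_iff:
  fixes A :: "'a::group_add set"
  shows "x \<in> uminus ` A \<longleftrightarrow> - x \<in> A"
  by (metis image_eqI imageE minus_minus)

lemma mem_symmetric_cong:
  fixes A :: "'a::group_add set"
  assumes "uminus ` A = A" "w = v \<or> w = - v"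
  shows "w \<in> A \<longleftrightarrow> v \<in> A"
  using assms mem_uminus_image_iff[of v A] by auto

lemma uminus_image_vimage_double_angle: "uminus ` (double_angle -` B) = double_angle -` B"
  by (simp add: set_eq_iff mem_uminus_image_iff)

section \<open>Three points on the circle\<close>

lemma norm_add3_sphere:
  fixes a b c :: "'a::real_inner"
  assumes "a \<in> sphere 0 1" "b \<in> sphere 0 1" "c \<in> sphere 0 1"
  shows "(norm (a + b + c))^2 = 3 + 2 * (a \<bullet> b + a \<bullet> c + b \<bullet> c)"
  using assms by (simp add: power2_norm_eq_inner inner_add_left inner_add_right inner_sphere_self
      inner_commute)

lemma one_le_norm_add3_iff:
  fixes a b c :: "'a::real_inner"
  assumes "a \<in> sphere 0 1" "b \<in> sphere 0 1" "c \<in> sphere 0 1"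
  shows "1 \<le> norm (a + b + c) \<longleftrightarrow> -1 \<le> a \<bullet> b + a \<bullet> c + b \<bullet> c"
proof -
  have affine_iff: "1 \<le> 3 + 2 * s \<longleftrightarrow> -1 \<le> s" for s :: real
    by linarith
  have "1 \<le> norm (a + b + c) \<longleftrightarrow> 1 \<le> (norm (a + b + c))^2"
    using abs_le_square_iff[of 1 "norm (a + b + c)"] by simp
  also have "\<dots> \<longleftrightarrow> -1 \<le> a \<bullet> b + a \<bullet> c + b \<bullet> c"
    unfolding norm_add3_sphere[OF assms] by (rule affine_iff)
  finally show ?thesis .
qed

lemma sphere_inner_eq_minus_1:
  fixes b c :: "'a::real_inner"
  assumes "b \<in> sphere 0 1" "c \<in> sphere 0 1" "b \<bullet> c = -1"
  shows "c = - b"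
proof -
  have "(norm (b + c))^2 = b \<bullet> b + 2 * (b \<bullet> c) + c \<bullet> c"
    by (simp add: power2_norm_eq_inner inner_add_left inner_add_right inner_commute)
  then have "norm (b + c) = 0"
    using assms by (simp add: inner_sphere_self)
  then show ?thesis
    by (simp add: eq_neg_iff_add_eq_0 add.commute)
qed

lemma inner_sphere_ge_minus_1: "a \<in> sphere 0 1 \<Longrightarrow> b \<in> sphere 0 1 \<Longrightarrow> -1 \<le> a \<bullet> b"
  using Cauchy_Schwarz_ineq2[of a b] by simp

lemma inner_add_pos_of_min_inner:
  fixes b c v :: "real^2"
  assumes b: "b \<in> sphere 0 1" and c: "c \<in> sphere 0 1" and v: "v \<in> sphere 0 1"
    and t: "-1 < b \<bullet> c" and vb: "b \<bullet> c \<le> v \<bullet> b" and vc: "b \<bullet> c \<le> v \<bullet> c"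
    and three: "1 \<le> norm (b + c + v)"
  shows "0 < v \<bullet> (b + c)"
proof (rule ccontr)
  define t p q where "t = b \<bullet> c" and "p = v \<bullet> (b + c)" and "q = v \<bullet> (b - c)"
  \<comment> \<open>coordinates of \<open>v\<close> along the orthogonal vectors \<open>b + c\<close> and \<open>b - c\<close>\<close>
  assume "\<not> 0 < v \<bullet> (b + c)"
  then have "p \<le> 0"
    by (simp add: p_def)
  have identity: "p^2 * (1 - t) + q^2 * (1 + t) = 2 * (1 - t^2)"
    using b c v unfolding t_def p_def q_def mem_sphere_0 norm_vec2_eq_1_iff inner_vec2
    by (simp add: algebra_simps) algebra
  have "t \<le> 1"
    using Cauchy_Schwarz_ineq2[of b c] b c by (simp add: t_def)
  have "-1 \<le> b \<bullet> c + b \<bullet> v + c \<bullet> v"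
    using three by (simp add: one_le_norm_add3_iff[OF b c v])
  then have "- (1 + t) \<le> p"
    by (simp add: p_def t_def inner_add_right inner_commute)
  then have "\<bar>p\<bar> \<le> 1 + t"
    using \<open>p \<le> 0\<close> by simp
  then have "p^2 \<le> (1 + t)^2"
    using power_mono[OF _ abs_ge_zero, of _ _ 2] by fastforce
  then have "p^2 * (1 - t) \<le> (1 + t)^2 * (1 - t)"
    using \<open>t \<le> 1\<close> by (simp add: mult_right_mono)
  then have "(1 + t) * (1 - t)^2 \<le> (1 + t) * q^2"
    using identity by (simp add: power2_eq_square algebra_simps)
  then have "(1 - t)^2 \<le> q^2"
    using t by (simp add: t_def)
  then have "1 - t \<le> \<bar>q\<bar>"
    using \<open>t \<le> 1\<close> by (simp add: abs_le_square_iff[symmetric])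
  moreover have "p + q = 2 * (v \<bullet> b)" and "p - q = 2 * (v \<bullet> c)"
    by (simp_all add: p_def q_def inner_add_right inner_diff_right)
  ultimately have "1 + t \<le> p"
    using vb vc by (auto simp: t_def abs_if split: if_splits)
  then show False
    using \<open>p \<le> 0\<close> t by (simp add: t_def)
qed

lemma opposite_sides_antipodal:
  fixes a b c :: "real^2"
  assumes a: "a \<in> sphere 0 1" and b: "b \<in> sphere 0 1" and c: "c \<in> sphere 0 1"
    and "0 < b \<bullet> rot90 a" and "c \<bullet> rot90 a < 0"
    and "1 \<le> norm (a + b + c)" and "1 \<le> norm (- a + b + c)"
  shows "c = - b"
proof -
  have identity: "(1 + b \<bullet> c)^2 - (a \<bullet> (b + c))^2 = 2 * ((1 + b \<bullet> c) * ((b \<bullet> rot90 a) * (c \<bullet> rot90 a)))"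
    using a b c unfolding mem_sphere_0 norm_vec2_eq_1_iff inner_vec2
    by (simp add: algebra_simps) algebra
  have "-1 \<le> a \<bullet> b + a \<bullet> c + b \<bullet> c"
    using assms by (simp add: one_le_norm_add3_iff)
  moreover have "-1 \<le> (- a) \<bullet> b + (- a) \<bullet> c + b \<bullet> c"
    using one_le_norm_add3_iff[of "- a" b c] assms by (simp only: mem_sphere_0 norm_minus_cancel)
  ultimately have "\<bar>a \<bullet> (b + c)\<bar> \<le> 1 + b \<bullet> c"
    by (simp add: inner_add_right abs_le_iff)
  then have "(a \<bullet> (b + c))^2 \<le> (1 + b \<bullet> c)^2"
    using power_mono[OF _ abs_ge_zero, of _ _ 2] by fastforce
  then have "0 \<le> (1 + b \<bullet> c) * ((b \<bullet> rot90 a) * (c \<bullet> rot90 a))"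
    using identity by linarith
  moreover have "(b \<bullet> rot90 a) * (c \<bullet> rot90 a) < 0"
    using assms by (simp add: mult_pos_neg)
  ultimately have "1 + b \<bullet> c \<le> 0"
    using mult_pos_neg[of "1 + b \<bullet> c"] by fastforce
  then have "b \<bullet> c = -1"
    using inner_sphere_ge_minus_1[OF b c] by simp
  then show ?thesis
    using sphere_inner_eq_minus_1[OF b c] by simp
qed

definition triple_product :: "real^2 \<Rightarrow> real^2 \<Rightarrow> real^2 \<Rightarrow> real" where
  "triple_product x y z = (x \<bullet> y) * (x \<bullet> z) * (y \<bullet> z)"

lemma continuous_on_triple_product:
  "continuous_on UNIV (\<lambda>((x, y), z). triple_product x y z)"
  unfolding triple_product_def case_prod_beta' by (intro continuous_intros)

lemma triple_product_double_angle:
  assumes "x \<in> sphere 0 1" "y \<in> sphere 0 1" "z \<in> sphere 0 1"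
  shows "triple_product x y z =
    (1 + double_angle x \<bullet> double_angle y + double_angle x \<bullet> double_angle z
       + double_angle y \<bullet> double_angle z) / 4"
  using assms unfolding triple_product_def mem_sphere_0 norm_vec2_eq_1_iff inner_vec2 double_angle_nth
  by algebra

lemma triple_product_nonneg_iff:
  assumes "x \<in> sphere 0 1" "y \<in> sphere 0 1" "z \<in> sphere 0 1"
  shows "0 \<le> triple_product x y z \<longleftrightarrow>
    1 \<le> norm (double_angle x + double_angle y + double_angle z)"
proof -
  have affine_iff: "0 \<le> (1 + s) / 4 \<longleftrightarrow> -1 \<le> s" for s :: real
    by (auto simp: zero_le_divide_iff)
  have "0 \<le> triple_product x y z \<longleftrightarrow>
      -1 \<le> double_angle x \<bullet> double_angle y + double_angle x \<bullet> double_angle z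
        + double_angle y \<bullet> double_angle z"
    unfolding triple_product_double_angle[OF assms] add.assoc by (rule affine_iff)
  also have "\<dots> \<longleftrightarrow> 1 \<le> norm (double_angle x + double_angle y + double_angle z)"
    using assms by (intro one_le_norm_add3_iff[symmetric] double_angle_sphere)
  finally show ?thesis .
qed

section \<open>Supports and products of measures\<close>

definition measure_support :: "'a::topological_space measure \<Rightarrow> 'a set" where
  "measure_support N = - \<Union>{U. open U \<and> U \<in> null_sets N}"

lemma closed_measure_support: "closed (measure_support N)"
  unfolding measure_support_def by (intro closed_Compl open_Union) auto

lemma AE_in_measure_support:
  fixes N :: "'a::second_countable_topology measure"
  shows "AE x in N. x \<in> measure_support N"
proof -
  obtain \<F> where \<F>: "\<F> \<subseteq> {U. open U \<and> U \<in> null_sets N}" "countable \<F>"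
      "\<Union>\<F> = \<Union>{U. open U \<and> U \<in> null_sets N}"
    by (rule Lindelof[of "{U. open U \<and> U \<in> null_sets N}"]) auto
  have "(\<Union>U\<in>\<F>. U) \<in> null_sets N"
    using \<F>(1) by (intro null_sets_UN'[OF \<F>(2)]) auto
  then show ?thesis
    using AE_not_in by (force simp: measure_support_def \<F>(3))
qed

lemma measure_support_subset:
  assumes "sets N = sets borel" "closed C" "AE x in N. x \<in> C"
  shows "measure_support N \<subseteq> C"
proof -
  have "- C \<in> sets N"
    using assms(1,2) by (simp add: borel_open)
  then have "- C \<in> null_sets N"
    using assms(3) by (simp add: AE_iff_null_sets)
  then show ?thesis
    using assms(2) by (auto simp: measure_support_def)
qed

lemma emeasure_open_measure_support:
  assumes "sets N = sets borel" "x \<in> measure_support N" "open U" "x \<in> U"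
  shows "emeasure N U \<noteq> 0"
  using assms by (auto simp: measure_support_def null_sets_def)

lemma AE_imp_ex_in:
  assumes "AE x in M. P x" "S \<in> sets M" "emeasure M S \<noteq> 0"
  shows "\<exists>x\<in>S. P x"
proof (rule ccontr)
  assume "\<not> (\<exists>x\<in>S. P x)"
  have "AE x in M. x \<notin> S"
    using assms(1) by eventually_elim (use \<open>\<not> (\<exists>x\<in>S. P x)\<close> in auto)
  then show False
    using assms(2,3) by (simp add: AE_iff_null_sets[symmetric] null_sets_def)
qed

lemma AE_pair_measure_Times:
  assumes "sigma_finite_measure M1" "sigma_finite_measure M2" "A \<in> sets M1" "B \<in> sets M2"
    and "AE x in M1. x \<in> A" "AE y in M2. y \<in> B"
  shows "AE p in M1 \<Otimes>\<^sub>M M2. p \<in> A \<times> B"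
proof -
  interpret pair_sigma_finite M1 M2
    by (rule pair_sigma_finite.intro) fact+
  show ?thesis
    using assms by (intro AE_pair_measure) (auto elim: AE_mp)
qed

lemma integrable_continuous_AE_compact:
  fixes f :: "'a::topological_space \<Rightarrow> 'b::{banach, second_countable_topology}"
  assumes "finite_measure N" "sets N = sets borel" "continuous_on UNIV f"
    and "compact K" "AE x in N. x \<in> K"
  shows "integrable N f"
proof -
  interpret finite_measure N
    by fact
  have "bounded (f ` K)"
    using assms(3,4) by (intro compact_imp_bounded compact_continuous_image)
      (auto intro: continuous_on_subset)
  then obtain B where "\<And>x. x \<in> K \<Longrightarrow> norm (f x) \<le> B"
    by (auto simp: bounded_iff)
  moreover have "f \<in> borel_measurable N"
    using assms(2,3) by (simp add: measurable_cong_sets[OF assms(2) refl] borel_measurable_continuous_onI)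
  ultimately show ?thesis
    using assms(5) by (intro integrable_const_bound[where B = B]) (auto elim: AE_mp)
qed

lemma integral_finite_support:
  fixes f :: "'a::t1_space \<Rightarrow> real"
  assumes "finite_measure N" "sets N = sets borel" "finite F" "AE x in N. x \<in> F"
    and "f \<in> borel_measurable borel"
  shows "(\<integral>x. f x \<partial>N) = (\<Sum>u\<in>F. f u * measure N {u})"
proof -
  interpret finite_measure N
    by fact
  have f: "f \<in> borel_measurable N"
    using assms(5) by (simp add: measurable_cong_sets[OF assms(2) refl])
  have F: "F \<in> sets N"
    using assms(2,3) by (simp add: finite_imp_closed borel_closed)
  have "(\<integral>x. f x \<partial>N) = (\<integral>x. f x * indicator F x \<partial>N)"
    using assms(4) f F by (intro integral_cong_AE) (auto elim: AE_mp)
  also have "\<dots> = (\<Sum>u\<in>F. f u * measure N {u})"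
    using assms(2,3) by (intro integral_indicator_finite_real) (auto simp: emeasure_eq_measure)
  finally show ?thesis .
qed

lemma measure_finite_support:
  fixes B :: "'a::t1_space set"
  assumes "finite_measure N" "sets N = sets borel" "finite F" "AE x in N. x \<in> F"
    and "B \<in> sets borel"
  shows "measure N B = (\<Sum>u\<in>F. indicator B u * measure N {u})"
proof -
  have "measure N B = (\<integral>x. indicator B x \<partial>N)"
    by (simp add: sets_eq_imp_space_eq[OF assms(2)])
  also have "\<dots> = (\<Sum>u\<in>F. indicator B u * measure N {u})"
    using assms by (intro integral_finite_support) auto
  finally show ?thesis .
qed

section \<open>Centred measures on the circle without short triple sums\<close>

text \<open>In the doubled picture a mixture of uniform distributions on two orthonormal bases
  becomes a mixture of uniform distributions on two antipodal pairs.\<close>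
definition antipodal_mixture :: "(real^2) measure \<Rightarrow> real^2 \<Rightarrow> real^2 \<Rightarrow> real \<Rightarrow> bool" where
  "antipodal_mixture N p q lam \<longleftrightarrow>
     (\<forall>B \<in> sets borel. measure N B =
        lam * (indicator B p / 2 + indicator B (- p) / 2)
        + (1 - lam) * (indicator B q / 2 + indicator B (- q) / 2))"

lemma antipodal_mixture_AE:
  assumes "prob_space N" "sets N = sets borel" "antipodal_mixture N p q lam"
  shows "AE v in N. v \<in> {p, - p, q, - q}"
proof -
  have F: "{p, - p, q, - q} \<in> sets borel"
    by (simp add: finite_imp_closed borel_closed)
  then have "measure N {p, - p, q, - q} = 1"
    using assms(3) by (simp add: antipodal_mixture_def algebra_simps)
  then show ?thesis
    using F assms(2) by (subst prob_space.AE_in_set_eq_1[OF assms(1)]) auto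
qed

lemma antipodal_mixture_integral:
  assumes "prob_space N" "sets N = sets borel" "antipodal_mixture N p q lam"
    and "f \<in> borel_measurable borel"
  shows "(\<integral>v. f v \<partial>N) = lam * (f p / 2 + f (- p) / 2) + (1 - lam) * (f q / 2 + f (- q) / 2)"
proof -
  define F where "F = {p, - p, q, - q}"
  have point_mass: "(\<Sum>u\<in>F. f u * indicator {u} w) = f w" if "w \<in> F" for w
  proof -
    have "(\<Sum>u\<in>F. f u * indicator {u} w) = (\<Sum>u\<in>F. if u = w then f u else 0)"
      by (intro sum.cong) (auto simp: indicator_def)
    then show ?thesis
      using that by (simp add: F_def sum.delta')
  qed
  have "(\<integral>v. f v \<partial>N) = (\<Sum>u\<in>F. f u * measure N {u})"
    using assms antipodal_mixture_AE[OF assms(1-3)] prob_space.finite_measure[OF assms(1)]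
    by (intro integral_finite_support) (auto simp: F_def)
  also have "\<dots> = (\<Sum>u\<in>F. lam / 2 * (f u * indicator {u} p) + lam / 2 * (f u * indicator {u} (- p))
      + (1 - lam) / 2 * (f u * indicator {u} q) + (1 - lam) / 2 * (f u * indicator {u} (- q)))"
    using assms(3) by (intro sum.cong) (auto simp: antipodal_mixture_def algebra_simps)
  also have "\<dots> = lam / 2 * (\<Sum>u\<in>F. f u * indicator {u} p) + lam / 2 * (\<Sum>u\<in>F. f u * indicator {u} (- p))
      + (1 - lam) / 2 * (\<Sum>u\<in>F. f u * indicator {u} q)
      + (1 - lam) / 2 * (\<Sum>u\<in>F. f u * indicator {u} (- q))"
    by (simp add: sum.distrib sum_distrib_left)
  also have "\<dots> = lam * (f p / 2 + f (- p) / 2) + (1 - lam) * (f q / 2 + f (- q) / 2)"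
    using point_mass[of p] point_mass[of "- p"] point_mass[of q] point_mass[of "- q"]
    by (simp add: F_def algebra_simps)
  finally show ?thesis .
qed

lemma antipodal_mixture_centred:
  assumes "prob_space N" "sets N = sets borel" "antipodal_mixture N p q lam"
  shows "(\<integral>v. v \<partial>N) = 0"
proof -
  have "integrable N (\<lambda>v. v)"
    using assms antipodal_mixture_AE[OF assms] prob_space.finite_measure[OF assms(1)]
    by (intro integrable_continuous_AE_compact[where K = "{p, - p, q, - q}"]) auto
  then have "(\<integral>v. v \<partial>N) \<bullet> (\<integral>v. v \<partial>N) = (\<integral>v. v \<bullet> (\<integral>v. v \<partial>N) \<partial>N)"
    by simp
  also have "\<dots> = 0"
    using assms by (subst antipodal_mixture_integral) (auto simp: inner_minus_left)
  finally show ?thesis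
    by simp
qed

lemma one_le_norm_add3_antipodal_pairs:
  fixes p q a b c :: "real^2"
  assumes p: "p \<in> sphere 0 1" and q: "q \<in> sphere 0 1"
    and "a \<in> {p, - p, q, - q}" "b \<in> {p, - p, q, - q}" "c \<in> {p, - p, q, - q}"
  shows "1 \<le> norm (a + b + c)"
proof -
  have "a \<in> sphere 0 1" "b \<in> sphere 0 1" "c \<in> sphere 0 1"
    using assms by auto
  moreover have "-1 \<le> a \<bullet> b + a \<bullet> c + b \<bullet> c"
    using assms inner_sphere_ge_minus_1[OF p q] Cauchy_Schwarz_ineq2[of p q]
    by (auto simp: inner_sphere_self inner_commute[of q p])
  ultimately show ?thesis
    by (simp add: one_le_norm_add3_iff)
qed

definition triple_sums_outside_ball :: "(real^2) set \<Rightarrow> bool" where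
  "triple_sums_outside_ball K \<longleftrightarrow> (\<forall>a\<in>K. \<forall>b\<in>K. \<forall>c\<in>K. a + b + c \<notin> ball 0 1)"

lemma triple_sums_outside_ballD:
  "triple_sums_outside_ball K \<Longrightarrow> a \<in> K \<Longrightarrow> b \<in> K \<Longrightarrow> c \<in> K \<Longrightarrow> 1 \<le> norm (a + b + c)"
  by (auto simp: triple_sums_outside_ball_def not_less)

locale centred_circle_measure = prob_space N for N :: "(real^2) measure" +
  assumes sets_N: "sets N = sets borel"
    and AE_sphere: "AE v in N. v \<in> sphere 0 1"
    and centred: "(\<integral>v. v \<partial>N) = 0"
begin

lemma space_N: "space N = UNIV"
  using sets_eq_imp_space_eq[OF sets_N] by simp

lemma measure_support_sphere: "measure_support N \<subseteq> sphere 0 1"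
  by (rule measure_support_subset[OF sets_N closed_sphere AE_sphere])

lemma integral_inner_eq_0: "(\<integral>v. v \<bullet> u \<partial>N) = 0"
proof -
  have "integrable N (\<lambda>v. v)"
    using sets_N AE_sphere by (intro integrable_continuous_AE_compact[where K = "sphere 0 1"])
      (auto intro: finite_measure_axioms)
  then show ?thesis
    by (simp add: centred)
qed

lemma AE_inner_eq_0_of_nonneg:
  assumes "\<forall>v\<in>measure_support N. 0 \<le> v \<bullet> u"
  shows "AE v in N. v \<bullet> u = 0"
proof -
  have "integrable N (\<lambda>v. v \<bullet> u)"
    using sets_N AE_sphere
    by (intro integrable_continuous_AE_compact[where K = "sphere 0 1"])
      (auto intro: finite_measure_axioms continuous_intros)
  moreover have "AE v in N. 0 \<le> v \<bullet> u"
    using AE_in_measure_support by eventually_elim (use assms in auto)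
  ultimately show ?thesis
    using integral_nonneg_eq_0_iff_AE integral_inner_eq_0 by metis
qed

lemma not_all_inner_pos: "\<not> (\<forall>v\<in>measure_support N. 0 < v \<bullet> u)"
proof
  assume pos: "\<forall>v\<in>measure_support N. 0 < v \<bullet> u"
  then have "AE v in N. v \<bullet> u = 0"
    by (intro AE_inner_eq_0_of_nonneg) (auto simp: less_imp_le)
  then have "AE v in N. False"
    using AE_in_measure_support by eventually_elim (use pos in force)
  then show False
    by simp
qed

lemma measure_finite_points:
  assumes "finite F" "AE v in N. v \<in> F" "B \<in> sets borel"
  shows "measure N B = (\<Sum>u\<in>F. indicator B u * measure N {u})"
  using assms sets_N by (intro measure_finite_support) (auto intro: finite_measure_axioms)

lemma integral_inner_finite_points:
  assumes "finite F" "AE v in N. v \<in> F"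
  shows "(\<Sum>u\<in>F. (u \<bullet> w) * measure N {u}) = 0"
  using assms sets_N integral_inner_eq_0[of w]
  by (subst integral_finite_support[symmetric]) (auto intro: finite_measure_axioms)

lemma antipodal_mixture_two_points:
  assumes a: "a \<in> sphere 0 1" and AE: "AE v in N. v \<in> {a, - a}"
  shows "antipodal_mixture N a a 1"
proof -
  have sum_F: "(\<Sum>u\<in>{a, - a}. g u) = g a + g (- a)" for g :: "real^2 \<Rightarrow> real"
    using sphere_neq_uminus[OF a] by (simp only: sum.insert finite.emptyI finite_insert
        insert_iff empty_iff sum.empty simp_thms)
  have "measure N {a} + measure N {- a} = 1"
    using prob_space by (subst (asm) measure_finite_points[OF _ AE]) (simp_all add: space_N sum_F)
  moreover have "measure N {a} = measure N {- a}"
    using integral_inner_finite_points[OF _ AE, of a]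
    by (simp add: sum_F inner_minus_left inner_sphere_self[OF a] del: inner_eq_zero_iff)
  ultimately have half: "measure N {a} = 1 / 2" "measure N {- a} = 1 / 2"
    by linarith+
  show ?thesis
    unfolding antipodal_mixture_def
    by (intro ballI, subst measure_finite_points[OF _ AE]) (simp_all add: sum_F half)
qed

lemma antipodal_mixture_four_points:
  assumes a: "a \<in> sphere 0 1" and b: "b \<in> sphere 0 1" and "0 < b \<bullet> rot90 a"
    and AE: "AE v in N. v \<in> {a, - a, b, - b}"
  shows "\<exists>lam. 0 \<le> lam \<and> lam \<le> 1 \<and> antipodal_mixture N a b lam"
proof -
  define \<alpha> \<beta> \<gamma> \<delta> where "\<alpha> = measure N {a}" and "\<beta> = measure N {- a}"
    and "\<gamma> = measure N {b}" and "\<delta> = measure N {- b}"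
  have "a \<noteq> - a" "b \<noteq> - b"
    by (rule sphere_neq_uminus[OF a], rule sphere_neq_uminus[OF b])
  moreover have "a \<noteq> b" "a \<noteq> - b"
    using \<open>0 < b \<bullet> rot90 a\<close> by auto
  ultimately have sum_F: "(\<Sum>u\<in>{a, - a, b, - b}. g u) = g a + g (- a) + g b + g (- b)"
    for g :: "real^2 \<Rightarrow> real"
    by (simp only: sum.insert finite.emptyI finite_insert insert_iff empty_iff sum.empty
        simp_thms minus_equation_iff[of a] neg_equal_iff_equal add.assoc add_0_right)
  have total: "\<alpha> + \<beta> + \<gamma> + \<delta> = 1"
    using prob_space by (subst (asm) measure_finite_points[OF _ AE])
      (simp_all add: space_N sum_F \<alpha>_def \<beta>_def \<gamma>_def \<delta>_def)
  have "(\<gamma> - \<delta>) * (b \<bullet> rot90 a) = 0"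
    using integral_inner_finite_points[OF _ AE, of "rot90 a"]
    by (simp add: sum_F \<alpha>_def \<beta>_def \<gamma>_def \<delta>_def algebra_simps)
  then have \<gamma>\<delta>: "\<gamma> = \<delta>"
    using \<open>0 < b \<bullet> rot90 a\<close> by simp
  have "\<alpha> - \<beta> + (\<gamma> - \<delta>) * (b \<bullet> a) = 0"
    using integral_inner_finite_points[OF _ AE, of a] a
    by (simp add: sum_F \<alpha>_def \<beta>_def \<gamma>_def \<delta>_def inner_sphere_self algebra_simps)
  then have \<alpha>\<beta>: "\<alpha> = \<beta>"
    using \<gamma>\<delta> by simp
  have "0 \<le> \<alpha>" "0 \<le> \<gamma>"
    by (simp_all add: \<alpha>_def \<gamma>_def)
  moreover have "antipodal_mixture N a b (2 * \<alpha>)"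
    unfolding antipodal_mixture_def
  proof
    fix B :: "(real^2) set"
    assume B: "B \<in> sets borel"
    have "measure N B = indicator B a * \<alpha> + indicator B (- a) * \<beta> + indicator B b * \<gamma>
        + indicator B (- b) * \<delta>"
      by (subst measure_finite_points[OF _ AE B]) (simp_all add: sum_F \<alpha>_def \<beta>_def \<gamma>_def \<delta>_def)
    moreover have "1 - 2 * \<alpha> = 2 * \<gamma>"
      using total \<alpha>\<beta> \<gamma>\<delta> by linarith
    ultimately show "measure N B = 2 * \<alpha> * (indicator B a / 2 + indicator B (- a) / 2)
        + (1 - 2 * \<alpha>) * (indicator B b / 2 + indicator B (- b) / 2)"
      using \<alpha>\<beta> \<gamma>\<delta> by (simp only:) (simp add: algebra_simps)
  qed
  ultimately show ?thesis
    using total \<alpha>\<beta> \<gamma>\<delta> by (intro exI[of _ "2 * \<alpha>"]) auto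
qed

text \<open>A pair of support points at maximal angle is antipodal: otherwise the whole support lies
  strictly on the side of their sum, which contradicts the zero mean.\<close>
lemma antipodal_pair_in_support:
  assumes "triple_sums_outside_ball (measure_support N)"
  shows "\<exists>a\<in>measure_support N. - a \<in> measure_support N"
proof -
  let ?K = "measure_support N"
  have "?K \<noteq> {}"
    using AE_in_measure_support[of N] AE_False by force
  moreover have "compact (?K \<times> ?K)"
    using closed_measure_support measure_support_sphere
    by (intro compact_Times) (auto simp: compact_eq_bounded_closed intro: bounded_subset[OF bounded_sphere])
  ultimately obtain b c where bc: "b \<in> ?K" "c \<in> ?K"
    and min: "\<And>x y. x \<in> ?K \<Longrightarrow> y \<in> ?K \<Longrightarrow> b \<bullet> c \<le> x \<bullet> y"
    using continuous_attains_inf[of "?K \<times> ?K" "\<lambda>p. fst p \<bullet> snd p"]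
    by (force intro!: continuous_intros)
  have b: "b \<in> sphere 0 1" and c: "c \<in> sphere 0 1"
    using bc measure_support_sphere by auto
  show ?thesis
  proof (cases "b \<bullet> c = -1")
    case True
    then show ?thesis
      using bc sphere_inner_eq_minus_1[OF b c] by auto
  next
    case False
    then have "-1 < b \<bullet> c"
      using inner_sphere_ge_minus_1[OF b c] by simp
    then have "\<forall>v\<in>?K. 0 < v \<bullet> (b + c)"
      using measure_support_sphere min bc triple_sums_outside_ballD[OF assms bc]
      by (intro ballI inner_add_pos_of_min_inner[OF b c]) auto
    then show ?thesis
      using not_all_inner_pos by blast
  qed
qed

lemma antipodal_mixture_of_triple_sums:
  assumes triple: "triple_sums_outside_ball (measure_support N)"
  shows "\<exists>p q lam. p \<in> sphere 0 1 \<and> q \<in> sphere 0 1 \<and> 0 \<le> lam \<and> lam \<le> 1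
    \<and> antipodal_mixture N p q lam"
proof -
  let ?K = "measure_support N"
  obtain a where aK: "a \<in> ?K" "- a \<in> ?K"
    using antipodal_pair_in_support[OF triple] by blast
  then have a: "a \<in> sphere 0 1"
    using measure_support_sphere by auto
  consider (one_side) u where "u = rot90 a \<or> u = - rot90 a" "\<forall>v\<in>?K. 0 \<le> v \<bullet> u"
    | (both_sides) b c where "b \<in> ?K" "c \<in> ?K" "0 < b \<bullet> rot90 a" "c \<bullet> rot90 a < 0"
    by (metis inner_minus_right neg_less_0_iff_less not_le)
  then show ?thesis
  proof cases
    case one_side
    have "AE v in N. v \<bullet> u = 0"
      by (rule AE_inner_eq_0_of_nonneg) (use one_side in blast)
    then have "AE v in N. v \<in> {a, - a}"
      using AE_in_measure_support[of N]
    proof eventually_elim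
      case (elim v)
      then have "v \<in> sphere 0 1" "v \<bullet> rot90 a = 0"
        using one_side measure_support_sphere by auto
      then show ?case
        using sphere_inner_rot90_eq_0[OF a] by simp
    qed
    then show ?thesis
      using antipodal_mixture_two_points[OF a] a by (intro exI[of _ a] exI[of _ 1]) auto
  next
    case both_sides
    have b: "b \<in> sphere 0 1"
      using both_sides measure_support_sphere by auto
    have opposite: "y = - x"
      if "x \<in> ?K" "y \<in> ?K" "0 < x \<bullet> rot90 a" "y \<bullet> rot90 a < 0" for x y
      using that aK measure_support_sphere
      by (intro opposite_sides_antipodal[OF a] triple_sums_outside_ballD[OF triple]) auto
    have four: "v \<in> {a, - a, b, - b}" if "v \<in> ?K" for v
    proof -
      consider "0 < v \<bullet> rot90 a" | "v \<bullet> rot90 a < 0" | "v \<bullet> rot90 a = 0"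
        by linarith
      then show ?thesis
      proof cases
        case 1
        then show ?thesis
          using opposite[OF that both_sides(2) _ both_sides(4)]
            opposite[OF both_sides(1,2) both_sides(3,4)] by simp
      next
        case 2
        then show ?thesis
          using opposite[OF both_sides(1) that both_sides(3)] by simp
      next
        case 3
        then show ?thesis
          using sphere_inner_rot90_eq_0[OF a subsetD[OF measure_support_sphere that] 3] by blast
      qed
    qed
    have "AE v in N. v \<in> {a, - a, b, - b}"
      using AE_in_measure_support[of N] by eventually_elim (rule four)
    then show ?thesis
      using antipodal_mixture_four_points[OF a b both_sides(3)] a b by blast
  qed
qed

end

lemma centred_triple_sums_iff_antipodal_mixture:
  assumes "prob_space N" "sets N = sets borel" "AE v in N. v \<in> sphere 0 1"
  shows "(\<integral>v. v \<partial>N) = 0 \<and> triple_sums_outside_ball (measure_support N) \<longleftrightarrow>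
    (\<exists>p q lam. p \<in> sphere 0 1 \<and> q \<in> sphere 0 1 \<and> 0 \<le> lam \<and> lam \<le> 1
      \<and> antipodal_mixture N p q lam)"
proof
  assume hyp: "(\<integral>v. v \<partial>N) = 0 \<and> triple_sums_outside_ball (measure_support N)"
  interpret centred_circle_measure N
    using centred_circle_measure_axioms.intro[OF assms(2,3) conjunct1[OF hyp]]
    by (intro centred_circle_measure.intro assms(1))
  show "\<exists>p q lam. p \<in> sphere 0 1 \<and> q \<in> sphere 0 1 \<and> 0 \<le> lam \<and> lam \<le> 1
      \<and> antipodal_mixture N p q lam"
    by (rule antipodal_mixture_of_triple_sums[OF conjunct2[OF hyp]])
next
  assume "\<exists>p q lam. p \<in> sphere 0 1 \<and> q \<in> sphere 0 1 \<and> 0 \<le> lam \<and> lam \<le> 1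
      \<and> antipodal_mixture N p q lam"
  then obtain p q lam where pq: "p \<in> sphere 0 1" "q \<in> sphere 0 1"
    and mix: "antipodal_mixture N p q lam"
    by blast
  have support: "measure_support N \<subseteq> {p, - p, q, - q}"
    using assms(2) antipodal_mixture_AE[OF assms(1,2) mix]
    by (intro measure_support_subset) (auto intro: finite_imp_closed)
  have "1 \<le> norm (a + b + c)"
    if "a \<in> measure_support N" "b \<in> measure_support N" "c \<in> measure_support N" for a b c
    using that by (intro one_le_norm_add3_antipodal_pairs[OF pq] subsetD[OF support])
  then have "triple_sums_outside_ball (measure_support N)"
    by (simp add: triple_sums_outside_ball_def not_less)
  then show "(\<integral>v. v \<partial>N) = 0 \<and> triple_sums_outside_ball (measure_support N)"
    using antipodal_mixture_centred[OF assms(1,2) mix] by simp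
qed

section \<open>The triple energy\<close>

locale circle_measure = prob_space M for M :: "(real^2) measure" +
  assumes sets_M: "sets M = sets borel"
    and AE_sphere: "AE x in M. x \<in> sphere 0 1"
begin

abbreviation M3 :: "(((real^2) \<times> (real^2)) \<times> (real^2)) measure" where
  "M3 \<equiv> (M \<Otimes>\<^sub>M M) \<Otimes>\<^sub>M M"

lemma sets_M2: "sets (M \<Otimes>\<^sub>M M) = sets borel"
proof -
  have "sets (M \<Otimes>\<^sub>M M) = sets (borel \<Otimes>\<^sub>M borel)"
    by (rule sets_pair_measure_cong[OF sets_M sets_M])
  then show ?thesis
    by (subst (asm) borel_prod)
qed

lemma sets_M3: "sets M3 = sets borel"
proof -
  have "sets M3 = sets (borel \<Otimes>\<^sub>M borel)"
    by (rule sets_pair_measure_cong[OF sets_M2 sets_M])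
  then show ?thesis
    by (subst (asm) borel_prod)
qed

lemma prob_space_M2: "prob_space (M \<Otimes>\<^sub>M M)"
  by (intro prob_space_pair prob_space_axioms)

lemma prob_space_M3: "prob_space M3"
  by (intro prob_space_pair prob_space_M2 prob_space_axioms)

lemma AE_M2_sphere: "AE p in M \<Otimes>\<^sub>M M. p \<in> sphere 0 1 \<times> sphere 0 1"
  using AE_sphere sets_M
  by (intro AE_pair_measure_Times) (auto intro: sigma_finite_measure_axioms)

lemma AE_M3_Times:
  assumes "A \<in> sets borel" "AE x in M. x \<in> A"
  shows "AE p in M3. p \<in> (A \<times> A) \<times> A"
proof -
  have "AE p in M \<Otimes>\<^sub>M M. p \<in> A \<times> A"
    using assms sets_M by (intro AE_pair_measure_Times) (auto intro: sigma_finite_measure_axioms)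
  then show ?thesis
    using assms sets_M sets_M2 prob_space_M2
    by (intro AE_pair_measure_Times)
      (auto intro: sigma_finite_measure_axioms prob_space_imp_sigma_finite)
qed

lemma AE_M3_sphere: "AE p in M3. p \<in> (sphere 0 1 \<times> sphere 0 1) \<times> sphere 0 1"
  using AE_sphere by (intro AE_M3_Times) auto

lemma emeasure_M3_Times:
  assumes "A \<in> sets borel" "B \<in> sets borel" "C \<in> sets borel"
  shows "emeasure M3 ((A \<times> B) \<times> C) = emeasure M A * emeasure M B * emeasure M C"
proof -
  have "emeasure M3 ((A \<times> B) \<times> C) = emeasure (M \<Otimes>\<^sub>M M) (A \<times> B) * emeasure M C"
    using assms sets_M sets_M2 by (intro emeasure_pair_measure_Times) auto
  also have "emeasure (M \<Otimes>\<^sub>M M) (A \<times> B) = emeasure M A * emeasure M B"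
    using assms sets_M by (intro emeasure_pair_measure_Times) auto
  finally show ?thesis .
qed

lemma integrable_continuous_M:
  fixes f :: "real^2 \<Rightarrow> 'b::{banach, second_countable_topology}"
  shows "continuous_on UNIV f \<Longrightarrow> integrable M f"
  using sets_M AE_sphere by (intro integrable_continuous_AE_compact[where K = "sphere 0 1"])
    (auto intro: finite_measure_axioms)

lemma integrable_continuous_M2:
  fixes f :: "(real^2) \<times> (real^2) \<Rightarrow> real"
  shows "continuous_on UNIV f \<Longrightarrow> integrable (M \<Otimes>\<^sub>M M) f"
  using sets_M2 AE_M2_sphere prob_space_M2
  by (intro integrable_continuous_AE_compact[where K = "sphere 0 1 \<times> sphere 0 1"])
    (auto intro: compact_Times prob_space.finite_measure)

lemma integrable_continuous_M3:
  fixes f :: "((real^2) \<times> (real^2)) \<times> (real^2) \<Rightarrow> real"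
  shows "continuous_on UNIV f \<Longrightarrow> integrable M3 f"
  using sets_M3 AE_M3_sphere prob_space_M3
  by (intro integrable_continuous_AE_compact[where K = "(sphere 0 1 \<times> sphere 0 1) \<times> sphere 0 1"])
    (auto intro: compact_Times compact_sphere prob_space.finite_measure)

lemma iterated_integral_eq_integral_M3:
  fixes f :: "((real^2) \<times> (real^2)) \<times> (real^2) \<Rightarrow> real"
  assumes f: "continuous_on UNIV f"
  shows "(\<integral>z. \<integral>y. \<integral>x. f ((x, y), z) \<partial>M \<partial>M \<partial>M) = integral\<^sup>L M3 f"
proof -
  interpret M2: pair_sigma_finite M M
    by unfold_locales
  interpret M21: pair_sigma_finite "M \<Otimes>\<^sub>M M" M
    by (intro pair_sigma_finite.intro prob_space_imp_sigma_finite prob_space_M2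
        sigma_finite_measure_axioms)
  have "(\<integral>y. \<integral>x. f ((x, y), z) \<partial>M \<partial>M) = (\<integral>p. f (p, z) \<partial>(M \<Otimes>\<^sub>M M))" for z
  proof -
    have slice: "(\<lambda>(x, y). f ((x, y), z)) = (\<lambda>p. f (p, z))"
      by auto
    have "continuous_on UNIV (\<lambda>p. f (p, z))"
      by (intro continuous_on_compose2[OF f] continuous_intros) auto
    then show ?thesis
      using M2.integral_snd[of "\<lambda>x y. f ((x, y), z)"] integrable_continuous_M2
      unfolding slice by blast
  qed
  then have "(\<integral>z. \<integral>y. \<integral>x. f ((x, y), z) \<partial>M \<partial>M \<partial>M) = (\<integral>z. \<integral>p. f (p, z) \<partial>(M \<Otimes>\<^sub>M M) \<partial>M)"
    by simp
  also have "\<dots> = integral\<^sup>L M3 f"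
    using M21.integral_snd[of "\<lambda>p z. f (p, z)"] integrable_continuous_M3[OF f]
    unfolding case_prod_eta by blast
  finally show ?thesis .
qed

definition mean :: "real^2" where
  "mean = (\<integral>x. double_angle x \<partial>M)"

lemma integral_affine_double_angle: "(\<integral>x. c + double_angle x \<bullet> u \<partial>M) = c + mean \<bullet> u"
proof -
  have "integrable M double_angle"
    by (rule integrable_continuous_M[OF continuous_on_double_angle])
  then have "(\<integral>x. c + double_angle x \<bullet> u \<partial>M) = (\<integral>x. c \<partial>M) + (\<integral>x. double_angle x \<bullet> u \<partial>M)"
    by (intro Bochner_Integration.integral_add) auto
  then show ?thesis
    using \<open>integrable M double_angle\<close> by (simp add: mean_def prob_space)
qed

lemma triple_energy_eq_integral_M3:
  "triple_energy M = (\<integral>((x, y), z). \<bar>triple_product x y z\<bar> \<partial>M3)"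
proof -
  have "continuous_on UNIV (\<lambda>((x, y), z). \<bar>triple_product x y z\<bar>)"
    unfolding triple_product_def case_prod_beta' by (intro continuous_intros)
  from iterated_integral_eq_integral_M3[OF this] show ?thesis
    by (simp add: triple_energy_def triple_product_def)
qed

lemma integral_M3_triple_product:
  "(\<integral>((x, y), z). triple_product x y z \<partial>M3) = 1 / 4 + 3 / 4 * (norm mean)^2"
proof -
  let ?\<phi> = double_angle
  define L where "L = (\<lambda>((x, y), z). (1 + ?\<phi> x \<bullet> ?\<phi> y + ?\<phi> x \<bullet> ?\<phi> z + ?\<phi> y \<bullet> ?\<phi> z) / 4)"
  have L_cont: "continuous_on UNIV L"
    unfolding L_def case_prod_beta'
    by (intro continuous_intros continuous_on_compose2[OF continuous_on_double_angle]) auto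
  have "AE p in M3. (\<lambda>((x, y), z). triple_product x y z) p = L p"
    using AE_M3_sphere by eventually_elim (auto simp: L_def triple_product_double_angle)
  then have "(\<integral>((x, y), z). triple_product x y z \<partial>M3) = integral\<^sup>L M3 L"
    using continuous_on_triple_product L_cont
    by (intro integral_cong_AE)
      (simp_all add: measurable_cong_sets[OF sets_M3 refl] borel_measurable_continuous_onI)
  also have "\<dots> = (\<integral>z. \<integral>y. \<integral>x. L ((x, y), z) \<partial>M \<partial>M \<partial>M)"
    by (rule iterated_integral_eq_integral_M3[OF L_cont, symmetric])
  also have "\<dots> = (\<integral>z. \<integral>y. (1 + mean \<bullet> ?\<phi> y + mean \<bullet> ?\<phi> z + ?\<phi> y \<bullet> ?\<phi> z) / 4 \<partial>M \<partial>M)"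
  proof -
    have "(\<integral>x. L ((x, y), z) \<partial>M) = (1 + mean \<bullet> ?\<phi> y + mean \<bullet> ?\<phi> z + ?\<phi> y \<bullet> ?\<phi> z) / 4" for y z
    proof -
      have "(\<integral>x. L ((x, y), z) \<partial>M)
          = (\<integral>x. (1 + ?\<phi> y \<bullet> ?\<phi> z) / 4 + ?\<phi> x \<bullet> ((1 / 4) *\<^sub>R (?\<phi> y + ?\<phi> z)) \<partial>M)"
        by (rule Bochner_Integration.integral_cong) (simp_all add: L_def inner_add_right field_simps)
      also have "\<dots> = (1 + ?\<phi> y \<bullet> ?\<phi> z) / 4 + mean \<bullet> ((1 / 4) *\<^sub>R (?\<phi> y + ?\<phi> z))"
        by (rule integral_affine_double_angle)
      finally show ?thesis
        by (simp add: inner_add_right field_simps)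
    qed
    then show ?thesis
      by (simp only:)
  qed
  also have "\<dots> = (\<integral>z. (1 + mean \<bullet> mean + 2 * (mean \<bullet> ?\<phi> z)) / 4 \<partial>M)"
  proof -
    have "(\<integral>y. (1 + mean \<bullet> ?\<phi> y + mean \<bullet> ?\<phi> z + ?\<phi> y \<bullet> ?\<phi> z) / 4 \<partial>M)
        = (1 + mean \<bullet> mean + 2 * (mean \<bullet> ?\<phi> z)) / 4" for z
    proof -
      have "(\<integral>y. (1 + mean \<bullet> ?\<phi> y + mean \<bullet> ?\<phi> z + ?\<phi> y \<bullet> ?\<phi> z) / 4 \<partial>M)
          = (\<integral>y. (1 + mean \<bullet> ?\<phi> z) / 4 + ?\<phi> y \<bullet> ((1 / 4) *\<^sub>R (mean + ?\<phi> z)) \<partial>M)"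
        by (rule Bochner_Integration.integral_cong) (simp_all add: inner_add_right inner_commute field_simps)
      also have "\<dots> = (1 + mean \<bullet> ?\<phi> z) / 4 + mean \<bullet> ((1 / 4) *\<^sub>R (mean + ?\<phi> z))"
        by (rule integral_affine_double_angle)
      finally show ?thesis
        by (simp add: inner_add_right field_simps)
    qed
    then show ?thesis
      by (simp only:)
  qed
  also have "\<dots> = (\<integral>z. (1 + mean \<bullet> mean) / 4 + ?\<phi> z \<bullet> ((1 / 2) *\<^sub>R mean) \<partial>M)"
    by (rule Bochner_Integration.integral_cong) (simp_all add: inner_commute field_simps)
  also have "\<dots> = (1 + mean \<bullet> mean) / 4 + mean \<bullet> ((1 / 2) *\<^sub>R mean)"
    by (rule integral_affine_double_angle)
  also have "\<dots> = 1 / 4 + 3 / 4 * (norm mean)^2"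
    by (simp add: power2_norm_eq_inner field_simps)
  finally show ?thesis .
qed

lemma triple_energy_decomposition:
  "triple_energy M = 1 / 4 + 3 / 4 * (norm mean)^2
    + (\<integral>((x, y), z). \<bar>triple_product x y z\<bar> - triple_product x y z \<partial>M3)"
proof -
  have "integrable M3 (\<lambda>((x, y), z). \<bar>triple_product x y z\<bar>)"
    using continuous_on_triple_product
    by (intro integrable_continuous_M3) (simp add: case_prod_beta' continuous_on_rabs)
  moreover have "integrable M3 (\<lambda>((x, y), z). triple_product x y z)"
    by (rule integrable_continuous_M3[OF continuous_on_triple_product])
  ultimately have "(\<integral>((x, y), z). \<bar>triple_product x y z\<bar> - triple_product x y z \<partial>M3)
      = (\<integral>((x, y), z). \<bar>triple_product x y z\<bar> \<partial>M3) - (\<integral>((x, y), z). triple_product x y z \<partial>M3)"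
    by (subst Bochner_Integration.integral_diff[symmetric]) (auto simp: case_prod_beta')
  then show ?thesis
    by (simp add: triple_energy_eq_integral_M3 integral_M3_triple_product)
qed

lemma quarter_le_triple_energy: "1 / 4 \<le> triple_energy M"
proof -
  have "0 \<le> (\<integral>((x, y), z). \<bar>triple_product x y z\<bar> - triple_product x y z \<partial>M3)"
    by (intro Bochner_Integration.integral_nonneg) auto
  then show ?thesis
    unfolding triple_energy_decomposition by simp
qed

lemma triple_energy_eq_quarter_iff:
  "triple_energy M = 1 / 4 \<longleftrightarrow> mean = 0 \<and> (AE ((x, y), z) in M3. 0 \<le> triple_product x y z)"
proof -
  let ?D = "\<lambda>((x, y), z). \<bar>triple_product x y z\<bar> - triple_product x y z"
  have "integrable M3 ?D"
    using continuous_on_triple_product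
    by (intro integrable_continuous_M3) (simp add: case_prod_beta' continuous_intros)
  then have "integral\<^sup>L M3 ?D = 0 \<longleftrightarrow> (AE p in M3. ?D p = 0)"
    by (intro integral_nonneg_eq_0_iff_AE) auto
  also have "\<dots> \<longleftrightarrow> (AE ((x, y), z) in M3. 0 \<le> triple_product x y z)"
    by (intro AE_cong) auto
  finally have defect: "integral\<^sup>L M3 ?D = 0 \<longleftrightarrow> (AE ((x, y), z) in M3. 0 \<le> triple_product x y z)" .
  have "0 \<le> integral\<^sup>L M3 ?D"
    by (intro Bochner_Integration.integral_nonneg) auto
  then show ?thesis
    unfolding triple_energy_decomposition defect[symmetric]
    by (auto simp: add_nonneg_eq_0_iff)
qed

definition doubled :: "(real^2) measure" where
  "doubled = distr M borel double_angle"

lemma space_M: "space M = UNIV"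
  using sets_eq_imp_space_eq[OF sets_M] by simp

lemma measurable_double_angle: "double_angle \<in> M \<rightarrow>\<^sub>M borel"
  using continuous_on_double_angle
  by (simp add: measurable_cong_sets[OF sets_M refl] borel_measurable_continuous_onI)

lemma prob_space_doubled: "prob_space doubled"
  unfolding doubled_def by (rule prob_space_distr[OF measurable_double_angle])

lemma sets_doubled: "sets doubled = sets borel"
  by (simp add: doubled_def)

lemma emeasure_doubled:
  "B \<in> sets borel \<Longrightarrow> emeasure doubled B = emeasure M (double_angle -` B)"
  unfolding doubled_def by (simp add: emeasure_distr[OF measurable_double_angle] space_M)

lemma measure_doubled:
  "B \<in> sets borel \<Longrightarrow> measure doubled B = measure M (double_angle -` B)"
  unfolding doubled_def by (simp add: measure_distr[OF measurable_double_angle] space_M)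

lemma AE_doubled_iff:
  "{v. P v} \<in> sets borel \<Longrightarrow> (AE v in doubled. P v) \<longleftrightarrow> (AE x in M. P (double_angle x))"
  unfolding doubled_def
  by (intro AE_distr_iff measurable_double_angle) (simp add: space_M)

lemma AE_doubled_sphere: "AE v in doubled. v \<in> sphere 0 1"
proof -
  have "AE x in M. double_angle x \<in> sphere 0 1"
    using AE_sphere by eventually_elim (rule double_angle_sphere)
  then show ?thesis
    by (subst AE_doubled_iff) auto
qed

lemma integral_doubled: "(\<integral>v. v \<partial>doubled) = mean"
  unfolding doubled_def mean_def by (intro integral_distr measurable_double_angle) simp

lemma AE_triple_product_nonneg_iff:
  "(AE ((x, y), z) in M3. 0 \<le> triple_product x y z) \<longleftrightarrow>
    triple_sums_outside_ball (measure_support doubled)"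
proof
  let ?S = "measure_support doubled"
  assume nonneg: "AE ((x, y), z) in M3. 0 \<le> triple_product x y z"
  show "triple_sums_outside_ball ?S"
    unfolding triple_sums_outside_ball_def mem_ball_0 not_less
  proof (intro ballI, rule ccontr)
    fix a b c
    assume abc: "a \<in> ?S" "b \<in> ?S" "c \<in> ?S" and "\<not> 1 \<le> norm (a + b + c)"
    define e where "e = (1 - norm (a + b + c)) / 3"
    have "0 < e"
      using \<open>\<not> 1 \<le> norm (a + b + c)\<close> by (simp add: e_def)
    have preimage: "double_angle -` ball w e \<in> sets borel" for w
      using measurable_sets[OF measurable_double_angle, of "ball w e"] sets_M space_M by simp
    have pos: "emeasure M (double_angle -` ball w e) \<noteq> 0" if "w \<in> ?S" for w
      using emeasure_open_measure_support[OF sets_doubled that, of "ball w e"] \<open>0 < e\<close>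
      by (simp add: emeasure_doubled)
    define U where "U = (double_angle -` ball a e \<times> double_angle -` ball b e) \<times> double_angle -` ball c e"
    have "U \<in> sets M3"
      unfolding U_def using preimage sets_M by (intro pair_measureI) auto
    moreover have "emeasure M3 U \<noteq> 0"
      using pos[OF abc(1)] pos[OF abc(2)] pos[OF abc(3)] preimage
      by (simp add: U_def emeasure_M3_Times)
    moreover have "AE ((x, y), z) in M3. x \<in> sphere 0 1 \<and> y \<in> sphere 0 1 \<and> z \<in> sphere 0 1
        \<and> 0 \<le> triple_product x y z"
      using AE_M3_sphere nonneg by eventually_elim auto
    ultimately obtain p where "p \<in> U" and p: "case p of ((x, y), z) \<Rightarrow> x \<in> sphere 0 1
        \<and> y \<in> sphere 0 1 \<and> z \<in> sphere 0 1 \<and> 0 \<le> triple_product x y z"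
      using AE_imp_ex_in by blast
    then obtain x y z where xyz: "x \<in> sphere 0 1" "y \<in> sphere 0 1" "z \<in> sphere 0 1"
      and "0 \<le> triple_product x y z"
      and close: "dist (double_angle x) a < e" "dist (double_angle y) b < e" "dist (double_angle z) c < e"
      by (auto simp: U_def dist_commute)
    then have "1 \<le> norm (double_angle x + double_angle y + double_angle z)"
      by (simp add: triple_product_nonneg_iff)
    also have "\<dots> \<le> norm (a + b + c) + dist (double_angle x) a + dist (double_angle y) b
        + dist (double_angle z) c"
      unfolding dist_norm by norm
    also have "\<dots> < 1"
      using close by (simp add: e_def)
    finally show False
      by simp
  qed
next
  assume triple: "triple_sums_outside_ball (measure_support doubled)"
  define G where "G = sphere 0 1 \<inter> double_angle -` measure_support doubled"
  have "G \<in> sets borel"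
    unfolding G_def using closed_measure_support continuous_on_double_angle
    by (intro borel_closed closed_Int closed_sphere closed_vimage) auto
  moreover have "AE x in M. double_angle x \<in> measure_support doubled"
    using AE_in_measure_support[of doubled] closed_measure_support
    by (subst (asm) AE_doubled_iff) (auto intro: borel_closed)
  then have "AE x in M. x \<in> G"
    using AE_sphere by eventually_elim (simp add: G_def)
  ultimately have "AE p in M3. p \<in> (G \<times> G) \<times> G"
    by (rule AE_M3_Times)
  then show "AE ((x, y), z) in M3. 0 \<le> triple_product x y z"
  proof eventually_elim
    case (elim p)
    then obtain x y z where "p = ((x, y), z)" "x \<in> G" "y \<in> G" "z \<in> G"
      by auto
    then show ?case
      using triple_sums_outside_ballD[OF triple]
      by (auto simp: G_def triple_product_nonneg_iff)
  qed
qed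

lemma antipodal_mixture_doubled:
  assumes a: "a \<in> sphere 0 1" "a' \<in> sphere 0 1" "a \<bullet> a' = 0"
    and b: "b \<in> sphere 0 1" "b' \<in> sphere 0 1" "b \<bullet> b' = 0"
    and mix: "two_bases_mixture M a a' b b' lam"
  shows "antipodal_mixture doubled (double_angle a) (double_angle b) lam"
  unfolding antipodal_mixture_def
proof
  fix B :: "(real^2) set"
  assume B: "B \<in> sets borel"
  have "double_angle -` B \<in> sets borel"
    using measurable_sets[OF measurable_double_angle B] sets_M space_M by simp
  then have "measure M (double_angle -` B) =
      lam * (indicator (double_angle -` B) a / 2 + indicator (double_angle -` B) a' / 2)
      + (1 - lam) * (indicator (double_angle -` B) b / 2 + indicator (double_angle -` B) b' / 2)"
    using mix uminus_image_vimage_double_angle unfolding two_bases_mixture_def by blast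
  then show "measure doubled B =
      lam * (indicator B (double_angle a) / 2 + indicator B (- double_angle a) / 2)
      + (1 - lam) * (indicator B (double_angle b) / 2 + indicator B (- double_angle b) / 2)"
    using double_angle_orthogonal[OF a] double_angle_orthogonal[OF b]
    by (simp add: measure_doubled[OF B] indicator_def)
qed

lemma two_bases_mixture_half_angle:
  assumes p: "p \<in> sphere 0 1" and q: "q \<in> sphere 0 1"
    and mix: "antipodal_mixture doubled p q lam"
  shows "two_bases_mixture M (half_angle p) (rot90 (half_angle p))
    (half_angle q) (rot90 (half_angle q)) lam"
  unfolding two_bases_mixture_def
proof (intro ballI impI)
  fix A :: "(real^2) set"
  assume A: "A \<in> sets borel" and sym: "uminus ` A = A"
  have half_A: "half_angle -` A \<in> sets borel"
    using measurable_sets[OF borel_measurable_half_angle A] by simp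
  have "AE x in M. x \<in> A \<longleftrightarrow> x \<in> double_angle -` (half_angle -` A)"
    using AE_sphere
  proof eventually_elim
    case (elim x)
    show ?case
      using mem_symmetric_cong[OF sym half_angle_double_angle[OF elim]] by simp
  qed
  moreover have "double_angle -` (half_angle -` A) \<in> sets M"
    using measurable_sets[OF measurable_double_angle half_A] by (simp add: space_M)
  ultimately have "measure M A = measure M (double_angle -` (half_angle -` A))"
    using A sets_M by (intro measure_eq_AE) simp_all
  also have "\<dots> = measure doubled (half_angle -` A)"
    by (rule measure_doubled[OF half_A, symmetric])
  also have "\<dots> = lam * (indicator (half_angle -` A) p / 2 + indicator (half_angle -` A) (- p) / 2)
      + (1 - lam) * (indicator (half_angle -` A) q / 2 + indicator (half_angle -` A) (- q) / 2)"
    using mix half_A unfolding antipodal_mixture_def by blast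
  also have "\<dots> = lam * (indicator A (half_angle p) / 2 + indicator A (rot90 (half_angle p)) / 2)
      + (1 - lam) * (indicator A (half_angle q) / 2 + indicator A (rot90 (half_angle q)) / 2)"
    using mem_symmetric_cong[OF sym half_angle_uminus[OF p]]
      mem_symmetric_cong[OF sym half_angle_uminus[OF q]]
    unfolding indicator_def vimage_eq by presburger
  finally show "measure M A = lam * (indicator A (half_angle p) / 2 + indicator A (rot90 (half_angle p)) / 2)
      + (1 - lam) * (indicator A (half_angle q) / 2 + indicator A (rot90 (half_angle q)) / 2)" .
qed

lemma ex_two_bases_mixture_iff:
  "(\<exists>a a' b b' lam. norm a = 1 \<and> norm a' = 1 \<and> a \<bullet> a' = 0 \<and>
      norm b = 1 \<and> norm b' = 1 \<and> b \<bullet> b' = 0 \<and>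
      0 \<le> lam \<and> lam \<le> 1 \<and> two_bases_mixture M a a' b b' lam) \<longleftrightarrow>
    (\<exists>p q lam. p \<in> sphere 0 1 \<and> q \<in> sphere 0 1 \<and> 0 \<le> lam \<and> lam \<le> 1
      \<and> antipodal_mixture doubled p q lam)"
proof
  assume "\<exists>a a' b b' lam. norm a = 1 \<and> norm a' = 1 \<and> a \<bullet> a' = 0 \<and>
      norm b = 1 \<and> norm b' = 1 \<and> b \<bullet> b' = 0 \<and>
      0 \<le> lam \<and> lam \<le> 1 \<and> two_bases_mixture M a a' b b' lam"
  then obtain a a' b b' lam where a: "a \<in> sphere 0 1" "a' \<in> sphere 0 1" "a \<bullet> a' = 0"
    and b: "b \<in> sphere 0 1" "b' \<in> sphere 0 1" "b \<bullet> b' = 0"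
    and lam: "0 \<le> lam" "lam \<le> 1" and mix: "two_bases_mixture M a a' b b' lam"
    by auto
  have "antipodal_mixture doubled (double_angle a) (double_angle b) lam"
    by (rule antipodal_mixture_doubled[OF a b mix])
  then show "\<exists>p q lam. p \<in> sphere 0 1 \<and> q \<in> sphere 0 1 \<and> 0 \<le> lam \<and> lam \<le> 1
      \<and> antipodal_mixture doubled p q lam"
    using double_angle_sphere[OF a(1)] double_angle_sphere[OF b(1)] lam by blast
next
  assume "\<exists>p q lam. p \<in> sphere 0 1 \<and> q \<in> sphere 0 1 \<and> 0 \<le> lam \<and> lam \<le> 1
      \<and> antipodal_mixture doubled p q lam"
  then obtain p q lam where p: "p \<in> sphere 0 1" and q: "q \<in> sphere 0 1"
    and lam: "0 \<le> lam" "lam \<le> 1" and mix: "antipodal_mixture doubled p q lam"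
    by blast
  have "norm (half_angle p) = 1" "norm (rot90 (half_angle p)) = 1"
    "norm (half_angle q) = 1" "norm (rot90 (half_angle q)) = 1"
    using half_angle_sphere(1)[OF p] half_angle_sphere(1)[OF q] rot90_sphere by auto
  then show "\<exists>a a' b b' lam. norm a = 1 \<and> norm a' = 1 \<and> a \<bullet> a' = 0 \<and>
      norm b = 1 \<and> norm b' = 1 \<and> b \<bullet> b' = 0 \<and>
      0 \<le> lam \<and> lam \<le> 1 \<and> two_bases_mixture M a a' b b' lam"
    using two_bases_mixture_half_angle[OF p q mix] inner_rot90_self lam by blast
qed

end

theorem theorem4p5:
  fixes M :: "(real^2) measure"
  assumes "prob_space M"
    and "sets M = sets borel"
    and "AE x in M. x \<in> sphere 0 1"
  shows "triple_energy M \<ge> 1/4 \<and>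
    (triple_energy M = 1/4 \<longleftrightarrow>
      (\<exists>a a' b b' lam. norm a = 1 \<and> norm a' = 1 \<and> a \<bullet> a' = 0 \<and>
          norm b = 1 \<and> norm b' = 1 \<and> b \<bullet> b' = 0 \<and>
          0 \<le> lam \<and> lam \<le> 1 \<and> two_bases_mixture M a a' b b' lam))"
proof -
  interpret circle_measure M
    using assms by (simp add: circle_measure_def circle_measure_axioms_def)
  have "triple_energy M = 1/4 \<longleftrightarrow>
      mean = 0 \<and> (AE ((x, y), z) in (M \<Otimes>\<^sub>M M) \<Otimes>\<^sub>M M. 0 \<le> triple_product x y z)"
    by (rule triple_energy_eq_quarter_iff)
  also have "\<dots> \<longleftrightarrow>
      (\<integral>v. v \<partial>doubled) = 0 \<and> triple_sums_outside_ball (measure_support doubled)"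
    by (simp only: integral_doubled AE_triple_product_nonneg_iff)
  also have "\<dots> \<longleftrightarrow> (\<exists>p q lam. p \<in> sphere 0 1 \<and> q \<in> sphere 0 1 \<and> 0 \<le> lam \<and> lam \<le> 1
      \<and> antipodal_mixture doubled p q lam)"
    by (rule centred_triple_sums_iff_antipodal_mixture[OF prob_space_doubled sets_doubled
          AE_doubled_sphere])
  also have "\<dots> \<longleftrightarrow> (\<exists>a a' b b' lam. norm a = 1 \<and> norm a' = 1 \<and> a \<bullet> a' = 0 \<and>
      norm b = 1 \<and> norm b' = 1 \<and> b \<bullet> b' = 0 \<and>
      0 \<le> lam \<and> lam \<le> 1 \<and> two_bases_mixture M a a' b b' lam)"
    by (rule ex_two_bases_mixture_iff[symmetric])
  finally show ?thesis
    using quarter_le_triple_energy by simp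
qed

end
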